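(* Let $G=(V,E)$ be a graph and let $\{A_\xi:\xi<\mu\}$ (for some ordinal $\mu$) be a family of subsets of $V$ with $\bigcup_{\xi<\mu}A_\xi=V$, such that for every $\xi<\mu$ the subgraph of $G$ spanned by $A_\xi$ has chromatic number at most $\omega$. Write $\bigcup A_{<\xi}=\bigcup\{A_\zeta:\zeta<\xi\}$. Suppose that for all $\xi<\mu$ and all $x\in A_\xi\setminus \bigcup A_{<\xi}$ we have $|N_G(x)\cap \bigcup A_{<\xi}|<\omega$. Then the chromatic number of $G$ is at most $\omega$.
   Context: For a graph $G=(V,E)$ and $v\in V$, $N_G(v)=\{w\in V:\{v,w\}\in E\}$. The chromatic number of $G$ is the least cardinal $\kappa$ such that $V$ is covered by $\kappa$ many independent sets. *)

theory Defs
  imports Main "HOL-Library.Countable_Set"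
begin

definition graph :: "'a set \<Rightarrow> 'a set set \<Rightarrow> bool" where
  "graph V E \<longleftrightarrow> (\<forall>e\<in>E. \<exists>x y. x \<noteq> y \<and> x \<in> V \<and> y \<in> V \<and> e = {x, y})"

definition nbhd :: "'a set \<Rightarrow> 'a set set \<Rightarrow> 'a \<Rightarrow> 'a set" where
  "nbhd V E v = {w \<in> V. {v, w} \<in> E}"

definition independent :: "'a set \<Rightarrow> 'a set set \<Rightarrow> 'a set \<Rightarrow> bool" where
  "independent V E S \<longleftrightarrow> S \<subseteq> V \<and> (\<forall>x\<in>S. \<forall>y\<in>S. {x, y} \<notin> E)"

definition chromatic_le_omega :: "'a set \<Rightarrow> 'a set set \<Rightarrow> bool" where
  "chromatic_le_omega V E \<longleftrightarrow>
     (\<exists>\<C>. countable \<C> \<and> (\<forall>S\<in>\<C>. independent V E S) \<and> V \<subseteq> \<Union>\<C>)"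

definition induced_edges :: "'a set set \<Rightarrow> 'a set \<Rightarrow> 'a set set" where
  "induced_edges E A = {e \<in> E. e \<subseteq> A}"

end

theory Submission
  imports Defs
begin

text \<open>Give each vertex x the least index \<xi> with x \<in> A \<xi>. Colour x by a pair: its colour
  in a countable colouring of A \<xi>, and a natural number chosen greedily, by well-founded
  recursion along the indices, to differ from the numbers of its neighbours of smaller index;
  there are only finitely many such neighbours, so a free number always exists. Adjacent
  vertices of equal index differ in the first component, the others in the second.\<close>

lemma chromatic_le_omega_if_colouring:
  fixes c :: "'a \<Rightarrow> 'b::countable"
  assumes "\<And>x y. x \<in> V \<Longrightarrow> y \<in> V \<Longrightarrow> {x, y} \<in> E \<Longrightarrow> c x \<noteq> c y"
  shows "chromatic_le_omega V E"
  unfolding chromatic_le_omega_def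
proof (intro exI conjI ballI)
  show "countable (range (\<lambda>p. {x \<in> V. c x = p}))" by simp
  show "V \<subseteq> \<Union>(range (\<lambda>p. {x \<in> V. c x = p}))" by auto
  show "independent V E S" if "S \<in> range (\<lambda>p. {x \<in> V. c x = p})" for S
    using that by (auto simp: independent_def dest: assms)
qed

lemma colouring_if_chromatic_le_omega:
  assumes "chromatic_le_omega V E"
  obtains c :: "'a \<Rightarrow> nat"
    where "\<And>x y. x \<in> V \<Longrightarrow> y \<in> V \<Longrightarrow> {x, y} \<in> E \<Longrightarrow> c x \<noteq> c y"
proof -
  obtain \<C> where \<C>: "countable \<C>" "\<And>S. S \<in> \<C> \<Longrightarrow> independent V E S" "V \<subseteq> \<Union>\<C>"
    using assms unfolding chromatic_le_omega_def by blast
  define colour_class where "colour_class x = (SOME S. S \<in> \<C> \<and> x \<in> S)" for x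
  have colour_class: "colour_class x \<in> \<C> \<and> x \<in> colour_class x" if "x \<in> V" for x
  proof -
    have "\<exists>S. S \<in> \<C> \<and> x \<in> S" using that \<C>(3) by blast
    then show ?thesis unfolding colour_class_def by (rule someI_ex)
  qed
  show thesis
  proof
    fix x y assume x: "x \<in> V" and y: "y \<in> V" and xy: "{x, y} \<in> E"
    have "colour_class x \<noteq> colour_class y"
    proof
      assume "colour_class x = colour_class y"
      then have "x \<in> colour_class x" "y \<in> colour_class x" "independent V E (colour_class x)"
        using colour_class[OF x] colour_class[OF y] \<C>(2) by auto
      with xy show False unfolding independent_def by blast
    qed
    then show "to_nat_on \<C> (colour_class x) \<noteq> to_nat_on \<C> (colour_class y)"
      using colour_class[OF x] colour_class[OF y] \<C>(1) by simp
  qed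
qed

lemma colouring_of_induced_subgraph:
  assumes "chromatic_le_omega A (induced_edges E A)"
  obtains c :: "'a \<Rightarrow> nat"
    where "\<And>x y. x \<in> A \<Longrightarrow> y \<in> A \<Longrightarrow> {x, y} \<in> E \<Longrightarrow> c x \<noteq> c y"
  using colouring_if_chromatic_le_omega[OF assms] by (auto simp: induced_edges_def)

lemma wf_greedy_labelling:
  fixes R :: "'a rel" and P :: "'a \<Rightarrow> 'a set"
  assumes "wf R" and "\<And>x. P x \<subseteq> {y. (y, x) \<in> R}"
  obtains f :: "'a \<Rightarrow> nat" where "\<And>x y. finite (P x) \<Longrightarrow> y \<in> P x \<Longrightarrow> f y \<noteq> f x"
proof
  define f :: "'a \<Rightarrow> nat" where "f = wfrec R (\<lambda>g x. LEAST m. m \<notin> g ` P x)"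
  have f: "f x = (LEAST m. m \<notin> f ` P x)" for x
  proof -
    have "cut f R x ` P x = f ` P x"
      using assms(2) by (intro image_cong) (auto simp: cut_def)
    then show ?thesis unfolding f_def by (subst wfrec[OF assms(1)]) simp
  qed
  fix x y assume "finite (P x)" "y \<in> P x"
  then have "\<exists>m. m \<notin> f ` P x" by (intro ex_new_if_finite infinite_UNIV_nat finite_imageI)
  then have "f x \<notin> f ` P x" unfolding f[of x] by (rule LeastI_ex)
  with \<open>y \<in> P x\<close> show "f y \<noteq> f x" by (metis image_eqI)
qed

lemma well_order_least_index:
  assumes "Well_order r" and "x \<in> (\<Union>\<xi>\<in>Field r. A \<xi>)"
  shows "\<exists>\<xi>\<in>Field r. x \<in> A \<xi> - (\<Union>\<zeta>\<in>{\<zeta>. (\<zeta>, \<xi>) \<in> r - Id}. A \<zeta>)"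
proof -
  have "wf (r - Id)" using assms(1) by (simp add: order_on_defs)
  obtain \<xi>\<^sub>0 where "\<xi>\<^sub>0 \<in> {\<xi> \<in> Field r. x \<in> A \<xi>}" using assms(2) by blast
  from wfE_min[OF \<open>wf (r - Id)\<close> this] obtain \<xi> where "\<xi> \<in> {\<xi> \<in> Field r. x \<in> A \<xi>}"
    and "\<And>\<zeta>. (\<zeta>, \<xi>) \<in> r - Id \<Longrightarrow> \<zeta> \<notin> {\<xi> \<in> Field r. x \<in> A \<xi>}" by metis
  then show ?thesis by (auto intro: FieldI1)
qed

lemma chromatic_le_omega_if_layered:
  fixes level :: "'a \<Rightarrow> 'i" and c :: "'a \<Rightarrow> nat"
  assumes "wf R"
    and "\<And>x y. x \<in> V \<Longrightarrow> y \<in> V \<Longrightarrow> level x \<noteq> level y \<Longrightarrow>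
           (level x, level y) \<in> R \<or> (level y, level x) \<in> R"
    and "\<And>x y. x \<in> V \<Longrightarrow> y \<in> V \<Longrightarrow> {x, y} \<in> E \<Longrightarrow> level x = level y \<Longrightarrow> c x \<noteq> c y"
    and "\<And>x. x \<in> V \<Longrightarrow> finite {y \<in> nbhd V E x. (level y, level x) \<in> R}"
  shows "chromatic_le_omega V E"
proof -
  define P where "P x = {y \<in> nbhd V E x. (level y, level x) \<in> R}" for x
  have finite_P: "finite (P x)" if "x \<in> V" for x using assms(4)[OF that] by (simp add: P_def)
  have "wf (inv_image R level)" using assms(1) by simp
  moreover have "P x \<subseteq> {y. (y, x) \<in> inv_image R level}" for x by (auto simp: P_def)
  ultimately obtain f :: "'a \<Rightarrow> nat"
    where f: "\<And>x y. finite (P x) \<Longrightarrow> y \<in> P x \<Longrightarrow> f y \<noteq> f x"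
    using wf_greedy_labelling by blast
  have "(c x, f x) \<noteq> (c y, f y)" if "x \<in> V" "y \<in> V" "{x, y} \<in> E" for x y
  proof (cases "level x = level y")
    case True
    then show ?thesis using assms(3) that by simp
  next
    case False
    have "{y, x} \<in> E" using that(3) by (simp add: insert_commute)
    with False have "y \<in> P x \<or> x \<in> P y"
      using assms(2) that unfolding P_def nbhd_def by auto
    then have "f x \<noteq> f y" using f[OF finite_P] that(1,2) by metis
    then show ?thesis by simp
  qed
  then show ?thesis by (rule chromatic_le_omega_if_colouring)
qed

theorem mainTheorem1:
  fixes V :: "'a set" and E :: "'a set set"
    and r :: "'i rel" and A :: "'i \<Rightarrow> 'a set"
  assumes "graph V E"
    and "Well_order r"
    and "\<forall>\<xi>\<in>Field r. A \<xi> \<subseteq> V"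
    and "(\<Union>\<xi>\<in>Field r. A \<xi>) = V"
    and "\<forall>\<xi>\<in>Field r. chromatic_le_omega (A \<xi>) (induced_edges E (A \<xi>))"
    and "\<forall>\<xi>\<in>Field r. \<forall>x \<in> A \<xi> - (\<Union>\<zeta>\<in>{\<zeta>. (\<zeta>, \<xi>) \<in> r - Id}. A \<zeta>).
           finite (nbhd V E x \<inter> (\<Union>\<zeta>\<in>{\<zeta>. (\<zeta>, \<xi>) \<in> r - Id}. A \<zeta>))"
  shows "chromatic_le_omega V E"
proof -
  let ?below = "\<lambda>\<xi>. \<Union>\<zeta>\<in>{\<zeta>. (\<zeta>, \<xi>) \<in> r - Id}. A \<zeta>"
  have "\<forall>x\<in>V. \<exists>\<xi>\<in>Field r. x \<in> A \<xi> - ?below \<xi>"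
    using well_order_least_index[OF assms(2), of _ A] unfolding assms(4) by blast
  then obtain level where
    level: "\<And>x. x \<in> V \<Longrightarrow> level x \<in> Field r \<and> x \<in> A (level x) - ?below (level x)"
    by metis
  have "\<forall>\<xi>\<in>Field r. \<exists>c :: 'a \<Rightarrow> nat. \<forall>x\<in>A \<xi>. \<forall>y\<in>A \<xi>. {x, y} \<in> E \<longrightarrow> c x \<noteq> c y"
    using colouring_of_induced_subgraph assms(5) by metis
  then obtain c :: "'i \<Rightarrow> 'a \<Rightarrow> nat" where c: "\<And>\<xi> x y. \<xi> \<in> Field r \<Longrightarrow>
      x \<in> A \<xi> \<Longrightarrow> y \<in> A \<xi> \<Longrightarrow> {x, y} \<in> E \<Longrightarrow> c \<xi> x \<noteq> c \<xi> y"
    by metis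
  show ?thesis
  proof (rule chromatic_le_omega_if_layered[of "r - Id" V level E "\<lambda>x. c (level x) x"])
    show "wf (r - Id)" using assms(2) by (simp add: order_on_defs)
    show "(level x, level y) \<in> r - Id \<or> (level y, level x) \<in> r - Id"
      if "x \<in> V" "y \<in> V" "level x \<noteq> level y" for x y
      using assms(2) level that unfolding order_on_defs total_on_def by auto
    show "c (level x) x \<noteq> c (level y) y"
      if "x \<in> V" "y \<in> V" "{x, y} \<in> E" "level x = level y" for x y
      using c level[OF that(1)] level[OF that(2)] that(3,4) by simp
    show "finite {y \<in> nbhd V E x. (level y, level x) \<in> r - Id}" if "x \<in> V" for x
    proof (rule finite_subset)
      show "finite (nbhd V E x \<inter> ?below (level x))" using assms(6) level[OF that] by blast
      show "{y \<in> nbhd V E x. (level y, level x) \<in> r - Id} \<subseteq> nbhd V E x \<inter> ?below (level x)"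
        using level unfolding nbhd_def by blast
    qed
  qed
qed

end
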